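(* For a function $f:\mathbb{R}\to\mathbb{R}$, $V>0$ and $p\in(0,\infty)$ define $$\|f\|_{p,V}:=\sup\Big\{\Big(\frac{1}{|\Omega|}\int_{\Omega}|f(x)|^{p}\,dx\Big)^{1/p} : \Omega\subset\mathbb{R} \text{ open and convex},\ |\Omega|=V\Big\},$$ and let $L^p_V:=\{f\mid \|f\|_{p,V}<\infty\}$ modulo functions vanishing almost everywhere. Let $p\in[1,\infty)$ and $T,S>0$ with $T<S$ such that $S/T\notin\mathbb{N}$. Then there exist $f,g\in L^p_T$ such that $$\|f\|_{p,T}<\|f\|_{p,S}\quad\text{and}\quad\|g\|_{p,S}<\|g\|_{p,T}.$$
   Context: $|\Omega|$ denotes Lebesgue measure; open convex subsets of $\mathbb{R}$ are open intervals; functions are measurable. *)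

theory Defs
  imports "HOL-Analysis.Analysis"
begin

definition enn_root :: "real \<Rightarrow> ennreal \<Rightarrow> ennreal" where
  "enn_root p A = (if A = \<infinity> then \<infinity> else ennreal ((enn2real A) powr (1 / p)))"

definition avg_p :: "real \<Rightarrow> real \<Rightarrow> (real \<Rightarrow> real) \<Rightarrow> real set \<Rightarrow> ennreal" where
  "avg_p p V f \<Omega> = (\<integral>\<^sup>+ x\<in>\<Omega>. ennreal (\<bar>f x\<bar> powr p) \<partial>lborel) / ennreal V"

definition norm_pV :: "real \<Rightarrow> real \<Rightarrow> (real \<Rightarrow> real) \<Rightarrow> ennreal" where
  "norm_pV p V f = (SUP \<Omega> \<in> {\<Omega>. open \<Omega> \<and> convex \<Omega> \<and> emeasure lborel \<Omega> = ennreal V}.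
                      enn_root p (avg_p p V f \<Omega>))"

text \<open>Membership in L^p_V (representatives: measurable functions with finite norm).\<close>
definition in_LpV :: "real \<Rightarrow> real \<Rightarrow> (real \<Rightarrow> real) \<Rightarrow> bool" where
  "in_LpV p V f \<longleftrightarrow> f \<in> borel_measurable lborel \<and> norm_pV p V f < \<infinity>"

end

theory Submission
  imports Defs
begin

text \<open>The indicator of \<open>(0,T)\<close> has mean 1 on the window \<open>(0,T)\<close> but mean at most \<open>T/S\<close>
  on every window of length \<open>S\<close>. Conversely, with \<open>k = \<lfloor>S/T\<rfloor>\<close> we have \<open>kT < S < (k+1)T\<close>
  since \<open>S/T\<close> is not an integer, so \<open>(0,S)\<close> has room for \<open>k+1\<close> intervals of length \<open>\<delta>\<close>
  separated by gaps longer than \<open>T\<close>. A window of length \<open>T\<close> meets at most one of them, so the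
  \<open>T\<close>-means of the indicator of their union are at most \<open>\<delta>/T\<close>, whereas its mean on
  \<open>(0,S)\<close> is \<open>(k+1)\<delta>/S > \<delta>/T\<close>.\<close>

lemma enn_root_ennreal:
  assumes "0 \<le> a"
  shows "enn_root p (ennreal a) = ennreal (a powr (1 / p))"
  using assms by (simp add: enn_root_def)

lemma enn_root_mono:
  assumes "A \<le> B" "0 < p"
  shows "enn_root p A \<le> enn_root p B"
proof (cases "B = \<infinity>")
  case True
  then show ?thesis by (simp add: enn_root_def)
next
  case False
  with assms(1) have "A \<noteq> \<infinity>" "enn2real A \<le> enn2real B"
    by (auto simp: top_unique enn2real_mono less_top)
  with False assms(2) show ?thesis
    by (auto simp: enn_root_def intro!: ennreal_leI powr_mono2)
qed

lemma enn_root_strict_mono: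
  assumes "0 \<le> a" "a < b" "0 < p"
  shows "enn_root p (ennreal a) < enn_root p (ennreal b)"
proof -
  have "a powr (1 / p) < b powr (1 / p)"
    using assms by (intro powr_less_mono2) auto
  with assms show ?thesis by (simp add: enn_root_ennreal ennreal_lessI)
qed

lemma avg_p_indicator:
  assumes "A \<in> sets borel" "\<Omega> \<in> sets borel" "0 < p"
  shows "avg_p p V (indicator A) \<Omega> = emeasure lborel (A \<inter> \<Omega>) / ennreal V"
proof -
  have "ennreal (\<bar>indicator A x :: real\<bar> powr p) * indicator \<Omega> x = indicator (A \<inter> \<Omega>) x" for x
    using assms(3) by (simp split: split_indicator)
  with assms(1,2) show ?thesis
    by (simp add: avg_p_def)
qed

lemma norm_pV_indicator_le:
  assumes bound: "\<And>\<Omega>. open \<Omega> \<Longrightarrow> convex \<Omega> \<Longrightarrow> emeasure lborel \<Omega> = ennreal V \<Longrightarrow>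
      emeasure lborel (A \<inter> \<Omega>) \<le> ennreal c"
    and "A \<in> sets borel" "0 \<le> c" "0 < V" "0 < p"
  shows "norm_pV p V (indicator A) \<le> enn_root p (ennreal (c / V))"
  unfolding norm_pV_def
proof (intro SUP_least enn_root_mono)
  fix \<Omega> :: "real set"
  assume "\<Omega> \<in> {\<Omega>. open \<Omega> \<and> convex \<Omega> \<and> emeasure lborel \<Omega> = ennreal V}"
  then have "avg_p p V (indicator A) \<Omega> \<le> ennreal c / ennreal V"
    using assms by (auto simp: avg_p_indicator intro!: divide_right_mono_ennreal)
  with assms(3,4) show "avg_p p V (indicator A) \<Omega> \<le> ennreal (c / V)"
    by (simp add: divide_ennreal)
qed (use assms in auto)

lemma norm_pV_indicator_ge:
  assumes "open \<Omega>" "convex \<Omega>" "emeasure lborel \<Omega> = ennreal V"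
    and "emeasure lborel (A \<inter> \<Omega>) = ennreal c"
    and "A \<in> sets borel" "0 \<le> c" "0 < V" "0 < p"
  shows "enn_root p (ennreal (c / V)) \<le> norm_pV p V (indicator A)"
proof -
  have "avg_p p V (indicator A) \<Omega> = ennreal (c / V)"
    using assms by (simp add: avg_p_indicator divide_ennreal)
  then show ?thesis
    using assms(1-3) unfolding norm_pV_def by (metis (mono_tags, lifting) SUP_upper mem_Collect_eq)
qed

lemma in_LpV_indicator:
  assumes "A \<in> sets borel" "0 < V" "0 < p"
  shows "in_LpV p V (indicator A)"
proof -
  have "norm_pV p V (indicator A) \<le> enn_root p (ennreal (V / V))"
    using assms by (intro norm_pV_indicator_le)
      (auto, metis Int_lower2 borel_open emeasure_mono sets_lborel)
  also have "\<dots> < \<infinity>"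
    by (simp add: enn_root_def)
  finally show ?thesis
    using assms(1) by (simp add: in_LpV_def)
qed

lemma convex_diff_le_emeasure:
  fixes \<Omega> :: "real set"
  assumes "convex \<Omega>" "\<Omega> \<in> sets borel" "x \<in> \<Omega>" "y \<in> \<Omega>" "x \<le> y"
  shows "ennreal (y - x) \<le> emeasure lborel \<Omega>"
proof -
  have "{x..y} \<subseteq> \<Omega>"
    using assms convex_contains_segment[of \<Omega>] closed_segment_eq_real_ivl[of x y] by auto
  then have "emeasure lborel {x..y} \<le> emeasure lborel \<Omega>"
    using assms(2) by (intro emeasure_mono) auto
  with assms(5) show ?thesis by simp
qed

definition spikes :: "real \<Rightarrow> real \<Rightarrow> nat \<Rightarrow> real set" where
  "spikes d \<delta> k = (\<Union>j\<le>k. {real j * d <..< real j * d + \<delta>})"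

lemma spikes_gap:
  assumes "i < j" "x \<in> {real i * d <..< real i * d + \<delta>}" "y \<in> {real j * d <..< real j * d + \<delta>}" "0 \<le> d"
  shows "d - \<delta> < y - x"
proof -
  have "(real i + 1) * d \<le> real j * d"
    using assms(1,4) by (intro mult_right_mono) auto
  with assms(2,3) show ?thesis by (auto simp: algebra_simps)
qed

lemma emeasure_spikes:
  assumes "0 \<le> \<delta>" "\<delta> < d"
  shows "emeasure lborel (spikes d \<delta> k) = ennreal ((real k + 1) * \<delta>)"
proof -
  let ?J = "\<lambda>j. {real j * d <..< real j * d + \<delta>}"
  have "disjoint_family_on ?J {..k}"
    unfolding disjoint_family_on_def
  proof (intro ballI impI)
    fix i j :: nat assume "i \<noteq> j"
    then show "?J i \<inter> ?J j = {}"
      using spikes_gap[of i j _ d \<delta>] spikes_gap[of j i _ d \<delta>] assms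
      by (cases "i < j") fastforce+
  qed
  then have "emeasure lborel (spikes d \<delta> k) = (\<Sum>j\<le>k. emeasure lborel (?J j))"
    unfolding spikes_def by (intro sum_emeasure[symmetric]) auto
  also have "\<dots> = (\<Sum>j\<le>k. ennreal \<delta>)"
    using assms(1) by simp
  also have "\<dots> = ennreal ((real k + 1) * \<delta>)"
    using sum_ennreal[of "{..k}" "\<lambda>_. \<delta>"] assms(1) by simp
  finally show ?thesis .
qed

lemma emeasure_spikes_inter_convex_le:
  fixes \<Omega> :: "real set"
  assumes "convex \<Omega>" "\<Omega> \<in> sets borel" "emeasure lborel \<Omega> = ennreal T"
    and "0 \<le> T" "0 \<le> \<delta>" "T + \<delta> < d"
  shows "emeasure lborel (spikes d \<delta> k \<inter> \<Omega>) \<le> ennreal \<delta>"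
proof (cases "spikes d \<delta> k \<inter> \<Omega> = {}")
  case False
  let ?J = "\<lambda>j. {real j * d <..< real j * d + \<delta>}"
  have far: "T < \<bar>y - x\<bar>" if "i \<noteq> j" "x \<in> ?J i" "y \<in> ?J j" for i j x y
    using spikes_gap[of i j x d \<delta> y] spikes_gap[of j i y d \<delta> x] that assms(4-6)
    by (cases "i < j") auto
  have near: "\<bar>y - x\<bar> \<le> T" if "x \<in> \<Omega>" "y \<in> \<Omega>" for x y
    using convex_diff_le_emeasure[OF assms(1,2), of x y] convex_diff_le_emeasure[OF assms(1,2), of y x]
      that assms(3,4) by (cases "x \<le> y") auto
  from False obtain x where "x \<in> spikes d \<delta> k \<inter> \<Omega>"
    by blast
  then obtain i where x: "x \<in> ?J i" "x \<in> \<Omega>"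
    by (auto simp: spikes_def)
  have "spikes d \<delta> k \<inter> \<Omega> \<subseteq> ?J i"
  proof
    fix y assume "y \<in> spikes d \<delta> k \<inter> \<Omega>"
    then obtain j where "y \<in> ?J j" "y \<in> \<Omega>"
      by (auto simp: spikes_def)
    with far[of i j x y] near[of x y] x show "y \<in> ?J i"
      by fastforce
  qed
  then have "emeasure lborel (spikes d \<delta> k \<inter> \<Omega>) \<le> emeasure lborel (?J i)"
    by (intro emeasure_mono) auto
  with assms(5) show ?thesis by simp
qed simp

lemma exists_nat_between_multiples:
  fixes S T :: real
  assumes "0 < T" "S / T \<notin> \<nat>" "0 \<le> S"
  shows "\<exists>k::nat. real k * T < S \<and> S < (real k + 1) * T"
proof
  let ?k = "nat \<lfloor>S / T\<rfloor>"
  have "real ?k \<noteq> S / T"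
    using assms(2) by (metis of_nat_in_Nats)
  moreover have "real ?k = of_int \<lfloor>S / T\<rfloor>"
    using assms(1,3) by simp
  then have "real ?k \<le> S / T" "S / T < real ?k + 1"
    by linarith+
  ultimately show "real ?k * T < S \<and> S < (real ?k + 1) * T"
    using assms(1) by (auto simp: field_simps)
qed

lemma exists_norm_pV_less_at_larger_scale:
  assumes "0 < p" "0 < T" "T < S" "S / T \<notin> \<nat>"
  shows "\<exists>f. in_LpV p T f \<and> norm_pV p T f < norm_pV p S f"
proof -
  obtain k :: nat where k: "real k * T < S" "S < (real k + 1) * T"
    using exists_nat_between_multiples[of T S] assms by auto
  define \<delta> where "\<delta> = (S - real k * T) / (2 * real k + 1)"
  define d where "d = T + 2 * \<delta>"
  \<comment> \<open>the gaps \<open>d - \<delta>\<close> exceed \<open>T\<close>, and the last of the \<open>k+1\<close> spikes ends exactly at \<open>S\<close>\<close>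
  have \<delta>: "0 < \<delta>"
    using k(1) by (simp add: \<delta>_def)
  have "(2 * real k + 1) * \<delta> = S - real k * T"
    unfolding \<delta>_def by (simp add: field_simps)
  then have last_spike_end: "real k * d + \<delta> = S"
    by (simp add: d_def algebra_simps)
  let ?A = "spikes d \<delta> k"
  have A: "?A \<in> sets borel"
    by (auto simp: spikes_def)
  have upper: "norm_pV p T (indicator ?A) \<le> enn_root p (ennreal (\<delta> / T))"
    using assms \<delta> A
    by (intro norm_pV_indicator_le emeasure_spikes_inter_convex_le) (auto simp: d_def)
  have "real j * d + \<delta> \<le> S" if "j \<le> k" for j
  proof -
    have "real j * d \<le> real k * d"
      using that \<delta> assms(2) by (intro mult_right_mono) (auto simp: d_def)
    with last_spike_end show ?thesis by simp
  qed
  moreover have "0 \<le> real j * d" for j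
    using \<delta> assms(2) by (simp add: d_def)
  ultimately have "?A \<subseteq> {0<..<S}"
    unfolding spikes_def by (smt (verit) UN_E atMost_iff greaterThanLessThan_iff subsetI)
  then have "?A \<inter> {0<..<S} = ?A"
    by blast
  then have lower: "enn_root p (ennreal ((real k + 1) * \<delta> / S)) \<le> norm_pV p S (indicator ?A)"
    using assms \<delta> A
    by (intro norm_pV_indicator_ge[where \<Omega> = "{0<..<S}"])
      (auto simp: emeasure_spikes d_def convex_real_interval)
  have "S * \<delta> < (real k + 1) * T * \<delta>"
    using k(2) \<delta> by (intro mult_strict_right_mono)
  then have "\<delta> / T < (real k + 1) * \<delta> / S"
    using assms(2,3) by (simp add: field_simps)
  then have "enn_root p (ennreal (\<delta> / T)) < enn_root p (ennreal ((real k + 1) * \<delta> / S))"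
    using \<delta> assms by (intro enn_root_strict_mono) auto
  with upper lower in_LpV_indicator[OF A assms(2,1)] show ?thesis
    by (meson order.strict_trans1 order.strict_trans2)
qed

lemma exists_norm_pV_less_at_smaller_scale:
  assumes "0 < p" "0 < T" "T < S"
  shows "\<exists>g. in_LpV p T g \<and> norm_pV p S g < norm_pV p T g"
proof -
  let ?A = "{0<..<T} :: real set"
  have upper: "norm_pV p S (indicator ?A) \<le> enn_root p (ennreal (T / S))"
  proof (rule norm_pV_indicator_le)
    fix \<Omega> :: "real set"
    show "emeasure lborel (?A \<inter> \<Omega>) \<le> ennreal T"
      using emeasure_mono[of "?A \<inter> \<Omega>" ?A lborel] assms(2) by simp
  qed (use assms in auto)
  have lower: "enn_root p (ennreal (T / T)) \<le> norm_pV p T (indicator ?A)"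
    using assms by (intro norm_pV_indicator_ge[where \<Omega> = ?A]) (auto simp: convex_real_interval)
  have "enn_root p (ennreal (T / S)) < enn_root p (ennreal (T / T))"
    using assms by (intro enn_root_strict_mono) auto
  with upper lower in_LpV_indicator[of ?A T p] assms show ?thesis
    by (meson borel_open open_greaterThanLessThan order.strict_trans1 order.strict_trans2)
qed

theorem lemma2p4:
  fixes p T S :: real
  assumes "1 \<le> p" and "0 < T" and "T < S" and "S / T \<notin> \<nat>"
  shows "\<exists>f g. in_LpV p T f \<and> in_LpV p T g \<and>
           norm_pV p T f < norm_pV p S f \<and> norm_pV p S g < norm_pV p T g"
proof -
  have "0 < p"
    using assms(1) by simp
  with assms show ?thesis
    using exists_norm_pV_less_at_larger_scale exists_norm_pV_less_at_smaller_scale by blast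
qed

end
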